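(* Let $\Delta$ be a pure $d$-dimensional simplicial complex on vertex set $[n]$, and $\mathbb{K}$ a field. For every $1\le i\le d-1$ there exists $j\ge1$ such that $\mathcal{F}(\Delta^{(i)})^{(j)}\neq\mathcal{F}(\Delta^{(i)})^j$ in $\mathbb{K}[x_1,\dots,x_n]$.
   Context: $\Delta^{(i)}$ is the $i$-th skeleton of $\Delta$ (faces of dimension at most $i$). For a simplicial complex $\Gamma$ with facets $F_1,\dots,F_s$, $\mathcal{F}(\Gamma)=(x_{F_1},\dots,x_{F_s})$ with $x_F=\prod_{j\in F}x_j$. For a squarefree monomial ideal $I$, $I^{(m)}=\bigcap_{P\in\mathrm{Ass}(I)}P^m$. *)

theory Defs
  imports Main "HOL-Library.Poly_Mapping"
begin

definition simplicial_complex :: "nat \<Rightarrow> nat set set \<Rightarrow> bool" where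
  "simplicial_complex n \<Delta> \<longleftrightarrow>
     {} \<in> \<Delta> \<and> (\<forall>F\<in>\<Delta>. F \<subseteq> {1..n}) \<and>
     (\<forall>F\<in>\<Delta>. \<forall>G. G \<subseteq> F \<longrightarrow> G \<in> \<Delta>) \<and>
     (\<forall>v\<in>{1..n}. {v} \<in> \<Delta>)"

definition facets :: "nat set set \<Rightarrow> nat set set" where
  "facets \<Gamma> = {F \<in> \<Gamma>. \<forall>G\<in>\<Gamma>. F \<subseteq> G \<longrightarrow> G = F}"

text \<open>Pure of dimension d: every facet has dimension d, i.e. d+1 vertices.\<close>
definition pure_of_dim :: "nat set set \<Rightarrow> nat \<Rightarrow> bool" where
  "pure_of_dim \<Delta> d \<longleftrightarrow> (\<forall>F\<in>facets \<Delta>. card F = d + 1)"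

definition skeleton :: "nat \<Rightarrow> nat set set \<Rightarrow> nat set set" where
  "skeleton i \<Delta> = {F \<in> \<Delta>. card F \<le> i + 1}"

type_synonym 'k mpoly = "(nat \<Rightarrow>\<^sub>0 nat) \<Rightarrow>\<^sub>0 'k"

definition polyring :: "nat \<Rightarrow> 'k::field mpoly set" where
  "polyring n = {p::'k mpoly. \<forall>m\<in>Poly_Mapping.keys p. Poly_Mapping.keys m \<subseteq> {1..n}}"

definition var :: "nat \<Rightarrow> 'k::field mpoly" where
  "var j = Poly_Mapping.single (Poly_Mapping.single j 1) 1"

definition monom_of_set :: "nat set \<Rightarrow> 'k::field mpoly" where
  "monom_of_set F = (\<Prod>j\<in>F. var j)"

definition is_ideal :: "nat \<Rightarrow> 'k::field mpoly set \<Rightarrow> bool" where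
  "is_ideal n J \<longleftrightarrow> J \<subseteq> polyring n \<and> 0 \<in> J \<and>
     (\<forall>a\<in>J. \<forall>b\<in>J. a + b \<in> J) \<and>
     (\<forall>r\<in>polyring n. \<forall>a\<in>J. r * a \<in> J)"

definition gen_ideal :: "nat \<Rightarrow> 'k::field mpoly set \<Rightarrow> 'k mpoly set" where
  "gen_ideal n S = \<Inter>{J. is_ideal n J \<and> S \<subseteq> J}"

definition ideal_prod :: "nat \<Rightarrow> 'k::field mpoly set \<Rightarrow> 'k mpoly set \<Rightarrow> 'k mpoly set" where
  "ideal_prod n I J = gen_ideal n {a * b | a b. a \<in> I \<and> b \<in> J}"

fun ideal_pow :: "nat \<Rightarrow> 'k::field mpoly set \<Rightarrow> nat \<Rightarrow> 'k mpoly set" where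
  "ideal_pow n I 0 = polyring n"
| "ideal_pow n I (Suc m) = ideal_prod n I (ideal_pow n I m)"

definition prime_ideal :: "nat \<Rightarrow> 'k::field mpoly set \<Rightarrow> bool" where
  "prime_ideal n P \<longleftrightarrow> is_ideal n P \<and> P \<noteq> polyring n \<and>
     (\<forall>a\<in>polyring n. \<forall>b\<in>polyring n. a * b \<in> P \<longrightarrow> a \<in> P \<or> b \<in> P)"

definition ass_primes :: "nat \<Rightarrow> 'k::field mpoly set \<Rightarrow> 'k mpoly set set" where
  "ass_primes n I = {P. prime_ideal n P \<and>
      (\<exists>f\<in>polyring n. P = {g \<in> polyring n. g * f \<in> I})}"

definition symb_pow :: "nat \<Rightarrow> 'k::field mpoly set \<Rightarrow> nat \<Rightarrow> 'k mpoly set" where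
  "symb_pow n I m = polyring n \<inter> \<Inter>{ideal_pow n P m | P. P \<in> ass_primes n I}"

definition facet_ideal :: "nat \<Rightarrow> nat set set \<Rightarrow> 'k::field mpoly set" where
  "facet_ideal n \<Gamma> = gen_ideal n (monom_of_set ` facets \<Gamma>)"

end

theory Submission
  imports Defs
begin

text \<open>Let \<open>\<Gamma>\<close> be the \<open>i\<close>-skeleton of \<open>\<Delta>\<close> and \<open>k = i + 1\<close>. Purity makes the facets of \<open>\<Gamma>\<close> exactly the
  \<open>k\<close>-subsets of faces of \<open>\<Delta>\<close>, so \<open>\<F>(\<Gamma>)\<close> is generated in degree \<open>k\<close> and its square lives in
  degrees \<open>\<ge> 2k\<close>. Since \<open>i + 2 \<le> d + 1\<close>, a facet of \<open>\<Delta>\<close> contains a set \<open>H\<close> of \<open>k + 1\<close> vertices,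
  all of whose \<open>k\<close>-subsets are facets of \<open>\<Gamma>\<close>. A prime \<open>P \<supseteq> \<F>(\<Gamma>)\<close> contains a variable of each
  such subset, hence at least two variables of \<open>H\<close>, so \<open>x\<^sub>H \<in> P\<^sup>2\<close>. Thus \<open>x\<^sub>H\<close> lies in the
  second symbolic power but, having degree \<open>k + 1 < 2k\<close>, not in the second ordinary power.\<close>

lemma polyring_zero: "0 \<in> polyring n"
  by (simp add: polyring_def)

lemma polyring_one: "1 \<in> polyring n"
  by (simp add: polyring_def)

lemma polyring_add:
  assumes "p \<in> polyring n" "q \<in> polyring n"
  shows "p + q \<in> polyring n"
  using assms keys_add[of p q] by (auto simp: polyring_def)

lemma polyring_mult:
  assumes "p \<in> polyring n" "q \<in> polyring n"
  shows "p * q \<in> polyring n"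
  unfolding polyring_def mem_Collect_eq
proof
  fix m assume "m \<in> Poly_Mapping.keys (p * q)"
  then obtain a b where "m = a + b"
    and a: "a \<in> Poly_Mapping.keys p" and b: "b \<in> Poly_Mapping.keys q"
    using keys_mult[of p q] by blast
  moreover have "Poly_Mapping.keys a \<subseteq> {1..n}" "Poly_Mapping.keys b \<subseteq> {1..n}"
    using assms a b by (auto simp: polyring_def)
  ultimately show "Poly_Mapping.keys m \<subseteq> {1..n}"
    using keys_add[of a b] by blast
qed

lemma var_in_polyring: "v \<in> {1..n} \<Longrightarrow> var v \<in> polyring n"
  by (simp add: polyring_def var_def)

lemma monom_of_set_in_polyring:
  assumes "F \<subseteq> {1..n}"
  shows "monom_of_set F \<in> polyring n"
proof (cases "finite F")
  case True
  then show ?thesis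
    using assms
    by (induction F rule: finite_induct)
       (simp_all add: monom_of_set_def polyring_one polyring_mult var_in_polyring)
qed (simp add: monom_of_set_def polyring_one)

lemma monom_of_set_union:
  "finite A \<Longrightarrow> finite B \<Longrightarrow> A \<inter> B = {} \<Longrightarrow>
    monom_of_set (A \<union> B) = monom_of_set A * monom_of_set B"
  by (simp add: monom_of_set_def prod.union_disjoint)

lemma monom_of_set_insert:
  "finite F \<Longrightarrow> v \<notin> F \<Longrightarrow> monom_of_set (insert v F) = var v * monom_of_set F"
  by (simp add: monom_of_set_def)

lemma monom_of_set_eq_single:
  "finite F \<Longrightarrow> monom_of_set F = Poly_Mapping.single (\<Sum>v\<in>F. Poly_Mapping.single v 1) 1"
  unfolding monom_of_set_def
  by (induction F rule: finite_induct) (auto simp: var_def mult_single one_poly_mapping.abs_eq)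

lemma is_idealI:
  assumes "J \<subseteq> polyring n" "0 \<in> J" "\<And>a b. a \<in> J \<Longrightarrow> b \<in> J \<Longrightarrow> a + b \<in> J"
    "\<And>r a. r \<in> polyring n \<Longrightarrow> a \<in> J \<Longrightarrow> r * a \<in> J"
  shows "is_ideal n J"
  using assms by (simp add: is_ideal_def)

lemma ideal_subset_polyring: "is_ideal n J \<Longrightarrow> J \<subseteq> polyring n"
  by (simp add: is_ideal_def)

lemma ideal_mult_left: "is_ideal n J \<Longrightarrow> r \<in> polyring n \<Longrightarrow> a \<in> J \<Longrightarrow> r * a \<in> J"
  by (simp add: is_ideal_def)

lemma ideal_mult_right: "is_ideal n J \<Longrightarrow> a \<in> J \<Longrightarrow> r \<in> polyring n \<Longrightarrow> a * r \<in> J"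
  using ideal_mult_left[of n J r a] by (simp add: mult.commute)

lemma is_ideal_polyring: "is_ideal n (polyring n)"
  by (rule is_idealI) (auto simp: polyring_zero polyring_add polyring_mult)

lemma gen_ideal_least: "is_ideal n J \<Longrightarrow> S \<subseteq> J \<Longrightarrow> gen_ideal n S \<subseteq> J"
  unfolding gen_ideal_def by blast

lemma gen_ideal_superset: "S \<subseteq> gen_ideal n S"
  unfolding gen_ideal_def by blast

lemma is_ideal_gen_ideal:
  assumes "S \<subseteq> polyring n"
  shows "is_ideal n (gen_ideal n S)"
  unfolding gen_ideal_def
proof (rule is_idealI)
  show "\<Inter>{J. is_ideal n J \<and> S \<subseteq> J} \<subseteq> polyring n"
    using assms is_ideal_polyring by blast
qed (auto simp: is_ideal_def)

lemma ideal_prod_mult_mem: "a \<in> A \<Longrightarrow> b \<in> B \<Longrightarrow> a * b \<in> ideal_prod n A B"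
  unfolding ideal_prod_def by (rule subsetD[OF gen_ideal_superset]) blast

lemma is_ideal_ideal_prod:
  assumes "is_ideal n A" "is_ideal n B"
  shows "is_ideal n (ideal_prod n A B)"
  unfolding ideal_prod_def
  using assms[THEN ideal_subset_polyring] polyring_mult
  by (intro is_ideal_gen_ideal) blast

lemma is_ideal_ideal_pow: "is_ideal n P \<Longrightarrow> is_ideal n (ideal_pow n P j)"
  by (induction j) (simp_all add: is_ideal_polyring is_ideal_ideal_prod)

lemma ideal_subset_ass_prime:
  assumes "is_ideal n I" "P \<in> ass_primes n I"
  shows "I \<subseteq> P"
proof
  fix g assume "g \<in> I"
  obtain f where "f \<in> polyring n" "P = {g \<in> polyring n. g * f \<in> I}"
    using assms(2) by (auto simp: ass_primes_def)
  then show "g \<in> P"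
    using assms(1) \<open>g \<in> I\<close> ideal_subset_polyring ideal_mult_right by blast
qed

subsection \<open>Squarefree monomials in prime ideals and their powers\<close>

lemma prime_ideal_monom_of_set:
  assumes P: "prime_ideal n P" and F: "finite F" "F \<noteq> {}" "F \<subseteq> {1..n}"
    and "monom_of_set F \<in> P"
  shows "\<exists>v\<in>F. var v \<in> P"
  using F \<open>monom_of_set F \<in> P\<close>
proof (induction F rule: finite_ne_induct)
  case (singleton v)
  then show ?case by (simp add: monom_of_set_def)
next
  case (insert v F)
  have "var v * monom_of_set F \<in> P"
    using insert by (simp add: monom_of_set_insert)
  moreover have "var v \<in> polyring n" "monom_of_set F \<in> polyring n"
    using insert.prems var_in_polyring[of v n] monom_of_set_in_polyring[of F n] by auto
  ultimately have "var v \<in> P \<or> monom_of_set F \<in> P"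
    using P unfolding prime_ideal_def by blast
  then show ?case
    using insert by auto
qed

lemma monom_of_set_in_ideal_pow:
  assumes P: "is_ideal n P" and S: "finite S" "\<forall>v\<in>S. var v \<in> P" "S \<subseteq> {1..n}"
  shows "monom_of_set S \<in> ideal_pow n P (card S)"
  using S
proof (induction S rule: finite_induct)
  case empty
  then show ?case by (simp add: monom_of_set_def polyring_one)
next
  case (insert v S)
  then show ?case
    by (simp add: monom_of_set_insert ideal_prod_mult_mem)
qed

lemma monom_of_set_in_ideal_pow_of_subset:
  assumes P: "is_ideal n P" and H: "finite H" "H \<subseteq> {1..n}"
    and S: "S \<subseteq> H" "\<forall>v\<in>S. var v \<in> P"
  shows "monom_of_set H \<in> ideal_pow n P (card S)"
proof -
  have "finite S" "S \<subseteq> {1..n}"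
    using S H finite_subset by auto
  have "(H - S) \<union> S = H"
    using S by blast
  then have split: "monom_of_set H = monom_of_set (H - S) * monom_of_set S"
    using monom_of_set_union[of "H - S" S] H \<open>finite S\<close> by auto
  have "monom_of_set (H - S) \<in> polyring n"
    using H by (intro monom_of_set_in_polyring) blast
  moreover have "monom_of_set S \<in> ideal_pow n P (card S)"
    using monom_of_set_in_ideal_pow[OF P \<open>finite S\<close> S(2) \<open>S \<subseteq> {1..n}\<close>] .
  ultimately show ?thesis
    unfolding split by (rule ideal_mult_left[OF is_ideal_ideal_pow[OF P]])
qed

text \<open>Otherwise \<open>k\<close> variables of \<open>H\<close> outside \<open>P\<close> would have their product in \<open>P\<close>,
  contradicting primality.\<close>
lemma card_vars_in_prime_ideal:
  assumes P: "prime_ideal n P" and H: "finite H" "H \<subseteq> {1..n}"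
    and k: "1 \<le> k" "k \<le> card H"
    and sub: "\<And>F. F \<subseteq> H \<Longrightarrow> card F = k \<Longrightarrow> monom_of_set F \<in> P"
  shows "card H + 1 - k \<le> card {v \<in> H. var v \<in> P}"
proof (rule ccontr)
  let ?C = "{v \<in> H. var v \<in> P}"
  assume "\<not> ?thesis"
  moreover have "card (H - ?C) = card H - card ?C"
    using H by (intro card_Diff_subset) auto
  ultimately have "k \<le> card (H - ?C)"
    using k by linarith
  then obtain F where F: "F \<subseteq> H - ?C" "card F = k" "finite F"
    by (rule obtain_subset_with_card_n)
  have "F \<noteq> {}"
    using F k by auto
  then obtain v where "v \<in> F" "var v \<in> P"
    using prime_ideal_monom_of_set[OF P \<open>finite F\<close> \<open>F \<noteq> {}\<close>] sub[of F] F H by blast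
  then show False
    using F by blast
qed

lemma monom_of_set_in_symb_pow:
  assumes I: "is_ideal n I" and H: "finite H" "H \<subseteq> {1..n}"
    and k: "1 \<le> k" "k \<le> card H"
    and sub: "\<And>F. F \<subseteq> H \<Longrightarrow> card F = k \<Longrightarrow> monom_of_set F \<in> I"
  shows "monom_of_set H \<in> symb_pow n I (card H + 1 - k)"
proof -
  have "monom_of_set H \<in> ideal_pow n P (card H + 1 - k)" if P: "P \<in> ass_primes n I" for P
  proof -
    let ?C = "{v \<in> H. var v \<in> P}"
    have prime: "prime_ideal n P"
      using P by (simp add: ass_primes_def)
    then have "is_ideal n P"
      by (simp add: prime_ideal_def)
    have "card H + 1 - k \<le> card ?C"
      using card_vars_in_prime_ideal[OF prime H k] sub ideal_subset_ass_prime[OF I P] by blast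
    then obtain S where S: "S \<subseteq> ?C" "card S = card H + 1 - k"
      by (rule obtain_subset_with_card_n)
    then have "monom_of_set H \<in> ideal_pow n P (card S)"
      by (intro monom_of_set_in_ideal_pow_of_subset[OF \<open>is_ideal n P\<close> H]) auto
    then show ?thesis
      using S by simp
  qed
  then show ?thesis
    using monom_of_set_in_polyring[OF H(2)] by (auto simp: symb_pow_def)
qed

subsection \<open>Degree bounds for ordinary powers\<close>

definition total_degree :: "(nat \<Rightarrow>\<^sub>0 nat) \<Rightarrow> nat" where
  "total_degree m = (\<Sum>k\<in>Poly_Mapping.keys m. Poly_Mapping.lookup m k)"

lemma total_degree_add: "total_degree (a + b) = total_degree a + total_degree b"
  unfolding total_degree_def by (rule setsum_keys_plus_distrib[where f = "\<lambda>k x. x"]) auto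

lemma total_degree_single: "total_degree (Poly_Mapping.single v k) = k"
  by (simp add: total_degree_def)

lemma total_degree_indicator:
  "finite F \<Longrightarrow> total_degree (\<Sum>v\<in>F. Poly_Mapping.single v 1) = card F"
  by (induction F rule: finite_induct)
     (simp add: total_degree_def, simp add: total_degree_add total_degree_single)

definition deg_at_least :: "nat \<Rightarrow> nat \<Rightarrow> 'k::field mpoly set" where
  "deg_at_least n a = {p \<in> polyring n. \<forall>m\<in>Poly_Mapping.keys p. a \<le> total_degree m}"

lemma deg_at_least_zero: "deg_at_least n 0 = polyring n"
  by (auto simp: deg_at_least_def)

lemma deg_at_least_mult:
  assumes "p \<in> deg_at_least n a" "q \<in> deg_at_least n b"
  shows "p * q \<in> deg_at_least n (a + b)"
proof -
  have "a + b \<le> total_degree m" if "m \<in> Poly_Mapping.keys (p * q)" for m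
  proof -
    obtain x y where "m = x + y" "x \<in> Poly_Mapping.keys p" "y \<in> Poly_Mapping.keys q"
      using keys_mult[of p q] \<open>m \<in> _\<close> by blast
    then show ?thesis
      using assms by (auto simp: deg_at_least_def total_degree_add intro: add_mono)
  qed
  then show ?thesis
    using assms by (simp add: deg_at_least_def polyring_mult)
qed

lemma is_ideal_deg_at_least: "is_ideal n (deg_at_least n a)"
proof (rule is_idealI)
  show "x + y \<in> deg_at_least n a" if "x \<in> deg_at_least n a" "y \<in> deg_at_least n a" for x y
    using that keys_add[of x y] by (auto simp: deg_at_least_def polyring_add)
  show "r * x \<in> deg_at_least n a" if "r \<in> polyring n" "x \<in> deg_at_least n a" for r x
    using deg_at_least_mult[of r n 0 x a] that by (simp add: deg_at_least_zero)
qed (auto simp: deg_at_least_def polyring_zero)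

lemma ideal_prod_subset_deg_at_least:
  assumes "A \<subseteq> deg_at_least n a" "B \<subseteq> deg_at_least n b"
  shows "ideal_prod n A B \<subseteq> deg_at_least n (a + b)"
  unfolding ideal_prod_def
  using assms deg_at_least_mult by (intro gen_ideal_least[OF is_ideal_deg_at_least]) blast

lemma ideal_pow_subset_deg_at_least:
  "I \<subseteq> deg_at_least n k \<Longrightarrow> ideal_pow n I j \<subseteq> deg_at_least n (j * k)"
  by (induction j) (simp_all add: deg_at_least_zero ideal_prod_subset_deg_at_least)

lemma monom_of_set_in_deg_at_least_iff:
  assumes "finite F" "F \<subseteq> {1..n}"
  shows "(monom_of_set F :: 'k::field mpoly) \<in> deg_at_least n a \<longleftrightarrow> a \<le> card F"
proof -
  have "Poly_Mapping.keys (monom_of_set F :: 'k mpoly) = {\<Sum>v\<in>F. Poly_Mapping.single v 1}"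
    using assms(1) by (simp add: monom_of_set_eq_single)
  moreover have "(monom_of_set F :: 'k mpoly) \<in> polyring n"
    using assms(2) by (rule monom_of_set_in_polyring)
  ultimately show ?thesis
    using total_degree_indicator[OF assms(1)] by (simp add: deg_at_least_def)
qed

lemma symb_pow_two_ne_ideal_pow_two:
  assumes I: "is_ideal n I" and deg: "I \<subseteq> deg_at_least n k" and "2 \<le> k"
    and H: "finite H" "H \<subseteq> {1..n}" "card H = k + 1"
    and sub: "\<And>F. F \<subseteq> H \<Longrightarrow> card F = k \<Longrightarrow> monom_of_set F \<in> I"
  shows "symb_pow n I 2 \<noteq> ideal_pow n I 2"
proof -
  have "monom_of_set H \<in> symb_pow n I (card H + 1 - k)"
    using H(3) \<open>2 \<le> k\<close> by (intro monom_of_set_in_symb_pow[OF I H(1,2)] sub) auto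
  then have "monom_of_set H \<in> symb_pow n I 2"
    using H(3) by simp
  moreover have "monom_of_set H \<notin> ideal_pow n I 2"
    using ideal_pow_subset_deg_at_least[OF deg, of 2] H \<open>2 \<le> k\<close>
    by (auto simp: monom_of_set_in_deg_at_least_iff)
  ultimately show ?thesis
    by blast
qed

subsection \<open>Simplicial complexes, skeletons and facet ideals\<close>

lemma face_subset_vertices: "simplicial_complex n \<Delta> \<Longrightarrow> F \<in> \<Delta> \<Longrightarrow> F \<subseteq> {1..n}"
  by (simp add: simplicial_complex_def)

lemma finite_face: "simplicial_complex n \<Delta> \<Longrightarrow> F \<in> \<Delta> \<Longrightarrow> finite F"
  by (meson face_subset_vertices finite_atLeastAtMost finite_subset)

lemma face_subset_closed: "simplicial_complex n \<Delta> \<Longrightarrow> G \<in> \<Delta> \<Longrightarrow> F \<subseteq> G \<Longrightarrow> F \<in> \<Delta>"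
  unfolding simplicial_complex_def by blast

lemma finite_simplicial_complex: "simplicial_complex n \<Delta> \<Longrightarrow> finite \<Delta>"
  using face_subset_vertices by (intro finite_subset[of \<Delta> "Pow {1..n}"]) auto

lemma face_subset_facet:
  assumes "simplicial_complex n \<Delta>" "F \<in> \<Delta>"
  obtains G where "G \<in> facets \<Delta>" "F \<subseteq> G"
  using finite_has_maximal2[OF finite_simplicial_complex[OF assms(1)] assms(2)]
  by (auto simp: facets_def)

lemma pure_complex_obtain_face:
  assumes "simplicial_complex n \<Delta>" "pure_of_dim \<Delta> d" "m \<le> d + 1"
  obtains H where "H \<in> \<Delta>" "card H = m"
proof -
  have "{} \<in> \<Delta>"
    using assms(1) by (simp add: simplicial_complex_def)
  then obtain G where "G \<in> facets \<Delta>"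
    using face_subset_facet[OF assms(1)] by blast
  then have G: "G \<in> \<Delta>" "m \<le> card G"
    using assms(2,3) by (auto simp: facets_def pure_of_dim_def)
  then obtain H where "H \<subseteq> G" "card H = m"
    using obtain_subset_with_card_n by blast
  then show ?thesis
    using face_subset_closed[OF assms(1) G(1)] that by blast
qed

lemma simplicial_complex_skeleton:
  assumes "simplicial_complex n \<Delta>"
  shows "simplicial_complex n (skeleton i \<Delta>)"
proof -
  have "card G \<le> i + 1" if "F \<in> \<Delta>" "card F \<le> i + 1" "G \<subseteq> F" for F G
    using that card_mono[OF finite_face[OF assms]] le_trans by blast
  then show ?thesis
    using assms unfolding simplicial_complex_def skeleton_def by auto
qed

lemma face_in_facets_skeleton:
  assumes "simplicial_complex n \<Delta>" "F \<in> \<Delta>" "card F = i + 1"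
  shows "F \<in> facets (skeleton i \<Delta>)"
proof -
  have "G = F" if "G \<in> \<Delta>" "card G \<le> i + 1" "F \<subseteq> G" for G
    using card_seteq[OF finite_face[OF assms(1) that(1)] that(3)] that(2) assms(3) by simp
  then show ?thesis
    using assms unfolding facets_def skeleton_def by auto
qed

lemma card_facets_skeleton:
  assumes sc: "simplicial_complex n \<Delta>" and pure: "pure_of_dim \<Delta> d" and "i \<le> d"
    and F: "F \<in> facets (skeleton i \<Delta>)"
  shows "card F = i + 1"
proof (rule ccontr)
  assume "card F \<noteq> i + 1"
  have "F \<in> \<Delta>" "card F \<le> i + 1"
    using F by (auto simp: facets_def skeleton_def)
  then obtain G where G: "G \<in> facets \<Delta>" "F \<subseteq> G"
    using face_subset_facet[OF sc] by blast
  have "G \<in> \<Delta>" "i + 1 \<le> card G"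
    using G pure \<open>i \<le> d\<close> by (auto simp: facets_def pure_of_dim_def)
  then obtain F' where F': "F \<subseteq> F'" "F' \<subseteq> G" "card F' = i + 1"
    using exists_subset_between[OF \<open>card F \<le> i + 1\<close> _ G(2) finite_face[OF sc]] by blast
  then have "F' \<in> facets (skeleton i \<Delta>)"
    using face_in_facets_skeleton face_subset_closed[OF sc \<open>G \<in> \<Delta>\<close>] sc by blast
  then have "F' = F"
    using F F' by (auto simp: facets_def skeleton_def)
  then show False
    using F' \<open>card F \<noteq> i + 1\<close> by simp
qed

lemma monom_of_set_in_facet_ideal: "F \<in> facets \<Gamma> \<Longrightarrow> monom_of_set F \<in> facet_ideal n \<Gamma>"
  unfolding facet_ideal_def by (rule subsetD[OF gen_ideal_superset]) (rule imageI)

lemma is_ideal_facet_ideal: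
  assumes "simplicial_complex n \<Gamma>"
  shows "is_ideal n (facet_ideal n \<Gamma>)"
  unfolding facet_ideal_def
proof (intro is_ideal_gen_ideal image_subsetI)
  fix F assume "F \<in> facets \<Gamma>"
  then have "F \<subseteq> {1..n}"
    using face_subset_vertices[OF assms] by (simp add: facets_def)
  then show "monom_of_set F \<in> polyring n"
    by (rule monom_of_set_in_polyring)
qed

lemma facet_ideal_subset_deg_at_least:
  assumes "simplicial_complex n \<Gamma>" "\<And>F. F \<in> facets \<Gamma> \<Longrightarrow> card F = k"
  shows "facet_ideal n \<Gamma> \<subseteq> deg_at_least n k"
  unfolding facet_ideal_def
proof (intro gen_ideal_least[OF is_ideal_deg_at_least] image_subsetI)
  fix F assume "F \<in> facets \<Gamma>"
  then have "F \<in> \<Gamma>"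
    by (simp add: facets_def)
  then show "monom_of_set F \<in> deg_at_least n k"
    using assms \<open>F \<in> facets \<Gamma>\<close> finite_face face_subset_vertices
    by (simp add: monom_of_set_in_deg_at_least_iff)
qed

theorem proposition6p2:
  fixes \<Delta> :: "nat set set" and n d :: nat
  assumes "simplicial_complex n \<Delta>" and "pure_of_dim \<Delta> d"
  shows "\<forall>i. 1 \<le> i \<and> i \<le> d - 1 \<longrightarrow>
           (\<exists>j\<ge>1. symb_pow n (facet_ideal n (skeleton i \<Delta>) :: 'k::field mpoly set) j
                    \<noteq> ideal_pow n (facet_ideal n (skeleton i \<Delta>)) j)"
proof (intro allI impI)
  fix i assume i: "1 \<le> i \<and> i \<le> d - 1"
  let ?\<Gamma> = "skeleton i \<Delta>"
  have \<Gamma>: "simplicial_complex n ?\<Gamma>"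
    using assms(1) by (rule simplicial_complex_skeleton)
  have "i + 2 \<le> d + 1"
    using i by linarith
  then obtain H where H: "H \<in> \<Delta>" "card H = i + 2"
    by (rule pure_complex_obtain_face[OF assms])
  have "symb_pow n (facet_ideal n ?\<Gamma> :: 'k mpoly set) 2 \<noteq> ideal_pow n (facet_ideal n ?\<Gamma>) 2"
  proof (rule symb_pow_two_ne_ideal_pow_two)
    show "is_ideal n (facet_ideal n ?\<Gamma>)"
      using \<Gamma> by (rule is_ideal_facet_ideal)
    show "facet_ideal n ?\<Gamma> \<subseteq> deg_at_least n (i + 1)"
      using card_facets_skeleton[OF assms] i by (intro facet_ideal_subset_deg_at_least[OF \<Gamma>]) auto
    show "monom_of_set F \<in> facet_ideal n ?\<Gamma>" if "F \<subseteq> H" "card F = i + 1" for F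
      using that face_subset_closed[OF assms(1) H(1)]
      by (intro monom_of_set_in_facet_ideal face_in_facets_skeleton[OF assms(1)]) auto
  qed (use i H finite_face[OF assms(1)] face_subset_vertices[OF assms(1)] in auto)
  then show "\<exists>j\<ge>1. symb_pow n (facet_ideal n ?\<Gamma> :: 'k mpoly set) j
                    \<noteq> ideal_pow n (facet_ideal n ?\<Gamma>) j"
    by (intro exI[of _ 2]) auto
qed

end
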